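(* Let $f:2^V\to\mathbb{Z}_{\ge0}$ be a connectivity function, $W\subseteq V$, and $(C_1,C_2,C_3)$ a minimum $W$-improvement of arity 3. Then for every $W'\subseteq W$, $f(C_1\cap W')\le f(W')$. Moreover, if $f(C_1\cap W')=f(W')$, then $(C_1\cup W', C_2\setminus W', C_3\setminus W')$ is also a minimum $W$-improvement.
   Context: A connectivity function $f:2^V\to\mathbb{Z}_{\ge0}$ ($V$ finite) satisfies $f(\emptyset)=0$, $f(X)=f(V\setminus X)$, and $f(X\cup Y)+f(X\cap Y)\le f(X)+f(Y)$. For $W\subseteq V$, a $W$-improvement is a tripartition $(C_1,C_2,C_3)$ of $V$ (pairwise disjoint, possibly empty, union $V$) with $f(C_i)<f(W)/2$, $f(C_i\cap W)<f(W)$, $f(C_i\cap(V\setminus W))<f(W)$ for each $i$. Its width is $\max_i f(C_i)$, its sum-width is $\sum_i f(C_i)$, and its arity is the number of nonempty $C_i$. A $W$-improvement is minimum if it has minimum width among all $W$-improvements, subject to that minimum arity, and subject to those minimum sum-width. *)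

theory Defs
  imports Main
begin

definition connectivity_function :: "'a set \<Rightarrow> ('a set \<Rightarrow> nat) \<Rightarrow> bool" where
  "connectivity_function V f \<longleftrightarrow>
     finite V \<and> f {} = 0 \<and>
     (\<forall>X. X \<subseteq> V \<longrightarrow> f X = f (V - X)) \<and>
     (\<forall>X Y. X \<subseteq> V \<longrightarrow> Y \<subseteq> V \<longrightarrow> f (X \<union> Y) + f (X \<inter> Y) \<le> f X + f Y)"

definition tripartition :: "'a set \<Rightarrow> 'a set \<Rightarrow> 'a set \<Rightarrow> 'a set \<Rightarrow> bool" where
  "tripartition V C1 C2 C3 \<longleftrightarrow>
     C1 \<inter> C2 = {} \<and> C1 \<inter> C3 = {} \<and> C2 \<inter> C3 = {} \<and> C1 \<union> C2 \<union> C3 = V"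

definition good_part :: "'a set \<Rightarrow> ('a set \<Rightarrow> nat) \<Rightarrow> 'a set \<Rightarrow> 'a set \<Rightarrow> bool" where
  "good_part V f W C \<longleftrightarrow>
     2 * f C < f W \<and> f (C \<inter> W) < f W \<and> f (C \<inter> (V - W)) < f W"

definition improvement :: "'a set \<Rightarrow> ('a set \<Rightarrow> nat) \<Rightarrow> 'a set \<Rightarrow> 'a set \<Rightarrow> 'a set \<Rightarrow> 'a set \<Rightarrow> bool" where
  "improvement V f W C1 C2 C3 \<longleftrightarrow>
     tripartition V C1 C2 C3 \<and> good_part V f W C1 \<and> good_part V f W C2 \<and> good_part V f W C3"

definition width :: "('a set \<Rightarrow> nat) \<Rightarrow> 'a set \<Rightarrow> 'a set \<Rightarrow> 'a set \<Rightarrow> nat" where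
  "width f C1 C2 C3 = max (f C1) (max (f C2) (f C3))"

definition sum_width :: "('a set \<Rightarrow> nat) \<Rightarrow> 'a set \<Rightarrow> 'a set \<Rightarrow> 'a set \<Rightarrow> nat" where
  "sum_width f C1 C2 C3 = f C1 + f C2 + f C3"

definition arity :: "'a set \<Rightarrow> 'a set \<Rightarrow> 'a set \<Rightarrow> nat" where
  "arity C1 C2 C3 = card {i::nat. (i = 1 \<and> C1 \<noteq> {}) \<or> (i = 2 \<and> C2 \<noteq> {}) \<or> (i = 3 \<and> C3 \<noteq> {})}"

definition min_improvement :: "'a set \<Rightarrow> ('a set \<Rightarrow> nat) \<Rightarrow> 'a set \<Rightarrow> 'a set \<Rightarrow> 'a set \<Rightarrow> 'a set \<Rightarrow> bool" where
  "min_improvement V f W C1 C2 C3 \<longleftrightarrow>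
     improvement V f W C1 C2 C3 \<and>
     (\<forall>D1 D2 D3. improvement V f W D1 D2 D3 \<longrightarrow>
        width f C1 C2 C3 < width f D1 D2 D3 \<or>
        (width f C1 C2 C3 = width f D1 D2 D3 \<and>
          (arity C1 C2 C3 < arity D1 D2 D3 \<or>
           (arity C1 C2 C3 = arity D1 D2 D3 \<and> sum_width f C1 C2 C3 \<le> sum_width f D1 D2 D3))))"

end

theory Submission
  imports Defs
begin

text \<open>Argue by induction over subsets \<open>X \<subseteq> W\<close>, so that \<open>f (C\<^sub>1 \<inter> Y) \<le> f Y\<close> for every
  proper subset \<open>Y\<close> of \<open>X\<close>, and suppose \<open>f X \<le> f (C\<^sub>1 \<inter> X)\<close>. Moving \<open>X\<close> into \<open>C\<^sub>1\<close> gives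
  \<open>(C\<^sub>1 \<union> X, C\<^sub>2 - X, C\<^sub>3 - X)\<close>. Submodularity yields \<open>f (C\<^sub>1 \<union> X) \<le> f C\<^sub>1\<close>; since \<open>X - C\<^sub>i\<close>
  meets \<open>C\<^sub>1\<close> in \<open>C\<^sub>1 \<inter> X\<close>, the induction hypothesis gives \<open>f X \<le> f (X - C\<^sub>i)\<close>, and then
  posimodularity yields \<open>f (C\<^sub>i - X) \<le> f C\<^sub>i\<close> for \<open>i = 2, 3\<close>. The same inequalities restricted
  to \<open>W\<close> show that the new tripartition is again a \<open>W\<close>-improvement. If \<open>f (C\<^sub>1 \<inter> X) > f X\<close> the
  first part shrinks strictly, lowering the sum-width without raising the width, which a minimum
  improvement of arity 3 does not allow; if equality holds, width, arity and sum-width are all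
  preserved, so the new improvement is minimum too.\<close>

lemma connectivity_function_submodular:
  assumes "connectivity_function V f" "X \<subseteq> V" "Y \<subseteq> V"
  shows "f (X \<union> Y) + f (X \<inter> Y) \<le> f X + f Y"
  using assms unfolding connectivity_function_def by blast

lemma connectivity_function_complement:
  assumes "connectivity_function V f" "X \<subseteq> V"
  shows "f (V - X) = f X"
  using assms unfolding connectivity_function_def by metis

lemma connectivity_function_posimodular:
  assumes cf: "connectivity_function V f" and "X \<subseteq> V" "Y \<subseteq> V"
  shows "f (X - Y) + f (Y - X) \<le> f X + f Y"
proof -
  have "f (X \<union> (V - Y)) + f (X \<inter> (V - Y)) \<le> f X + f (V - Y)"
    using connectivity_function_submodular[OF cf, of X "V - Y"] assms by auto
  moreover have "X \<union> (V - Y) = V - (Y - X)" "X \<inter> (V - Y) = X - Y"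
    using assms by auto
  moreover have "f (V - (Y - X)) = f (Y - X)" "f (V - Y) = f Y"
    using connectivity_function_complement[OF cf, of "Y - X"]
      connectivity_function_complement[OF cf, of Y] assms by auto
  ultimately show ?thesis
    by simp
qed

lemma arity_le_3: "arity C1 C2 C3 \<le> 3"
proof -
  have "{i::nat. (i = 1 \<and> C1 \<noteq> {}) \<or> (i = 2 \<and> C2 \<noteq> {}) \<or> (i = 3 \<and> C3 \<noteq> {})} \<subseteq> {1, 2, 3}"
    by auto
  from card_mono[OF _ this] show ?thesis
    unfolding arity_def by simp
qed

lemma good_part_diff:
  assumes cf: "connectivity_function V f" and "W \<subseteq> V" "X \<subseteq> W" "C \<subseteq> V"
    and good: "good_part V f W C" and le: "f X \<le> f (X - C)"
  shows "good_part V f W (C - X) \<and> f (C - X) \<le> f C"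
proof -
  have "f (C - X) + f (X - C) \<le> f C + f X"
    using connectivity_function_posimodular[OF cf, of C X] assms by auto
  moreover have "f (C \<inter> W - X) + f (X - C \<inter> W) \<le> f (C \<inter> W) + f X"
    using connectivity_function_posimodular[OF cf, of "C \<inter> W" X] assms by auto
  moreover have "X - C \<inter> W = X - C" "(C - X) \<inter> W = C \<inter> W - X"
    "(C - X) \<inter> (V - W) = C \<inter> (V - W)"
    using assms by auto
  ultimately show ?thesis
    using good le unfolding good_part_def by auto
qed

lemma good_part_union:
  assumes cf: "connectivity_function V f" and "W \<subseteq> V" "X \<subseteq> W" "C \<subseteq> V"
    and good: "good_part V f W C" and le: "f X \<le> f (C \<inter> X)"
  shows "good_part V f W (C \<union> X) \<and> f (C \<union> X) + f (C \<inter> X) \<le> f C + f X"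
proof -
  have "f (C \<union> X) + f (C \<inter> X) \<le> f C + f X"
    using connectivity_function_submodular[OF cf, of C X] assms by auto
  moreover have "f (C \<inter> W \<union> X) + f (C \<inter> W \<inter> X) \<le> f (C \<inter> W) + f X"
    using connectivity_function_submodular[OF cf, of "C \<inter> W" X] assms by auto
  moreover have "C \<inter> W \<inter> X = C \<inter> X" "(C \<union> X) \<inter> W = C \<inter> W \<union> X"
    "(C \<union> X) \<inter> (V - W) = C \<inter> (V - W)"
    using assms by auto
  ultimately show ?thesis
    using good le unfolding good_part_def by auto
qed

lemma le_diff_if_proper_subsets_inter_le:
  fixes f :: "'a set \<Rightarrow> nat"
  assumes proper: "\<And>Y. Y \<subset> X \<Longrightarrow> f (C1 \<inter> Y) \<le> f Y"
    and le: "f X \<le> f (C1 \<inter> X)" and disj: "C1 \<inter> C = {}"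
  shows "f X \<le> f (X - C)"
proof (cases "X \<inter> C = {}")
  case True
  then show ?thesis by (simp add: Diff_triv)
next
  case False
  then have "f (C1 \<inter> (X - C)) \<le> f (X - C)"
    by (intro proper) auto
  moreover have "C1 \<inter> (X - C) = C1 \<inter> X"
    using disj by auto
  ultimately show ?thesis
    using le by simp
qed

lemma improvement_shift_into_first:
  assumes cf: "connectivity_function V f" and "W \<subseteq> V" "X \<subseteq> W"
    and imp: "improvement V f W C1 C2 C3"
    and le1: "f X \<le> f (C1 \<inter> X)" and proper: "\<And>Y. Y \<subset> X \<Longrightarrow> f (C1 \<inter> Y) \<le> f Y"
  shows "improvement V f W (C1 \<union> X) (C2 - X) (C3 - X)"
    and "f (C1 \<union> X) + f (C1 \<inter> X) \<le> f C1 + f X"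
    and "f (C2 - X) \<le> f C2" and "f (C3 - X) \<le> f C3"
proof -
  have tp: "tripartition V C1 C2 C3" and good: "good_part V f W C1"
    "good_part V f W C2" "good_part V f W C3"
    using imp unfolding improvement_def by auto
  then have sub: "C1 \<subseteq> V" "C2 \<subseteq> V" "C3 \<subseteq> V" and disj: "C1 \<inter> C2 = {}" "C1 \<inter> C3 = {}"
    unfolding tripartition_def by auto
  note le2 = le_diff_if_proper_subsets_inter_le[OF proper le1 disj(1)]
  note le3 = le_diff_if_proper_subsets_inter_le[OF proper le1 disj(2)]
  note part1 = good_part_union[OF cf assms(2,3) sub(1) good(1) le1]
  note part2 = good_part_diff[OF cf assms(2,3) sub(2) good(2) le2]
  note part3 = good_part_diff[OF cf assms(2,3) sub(3) good(3) le3]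
  have "tripartition V (C1 \<union> X) (C2 - X) (C3 - X)"
    using tp assms(2,3) unfolding tripartition_def by auto
  with part1 part2 part3 show "improvement V f W (C1 \<union> X) (C2 - X) (C3 - X)"
    unfolding improvement_def by blast
  show "f (C1 \<union> X) + f (C1 \<inter> X) \<le> f C1 + f X" "f (C2 - X) \<le> f C2" "f (C3 - X) \<le> f C3"
    using part1 part2 part3 by auto
qed

lemma min_improvement_sum_width_le:
  assumes "min_improvement V f W C1 C2 C3" "arity C1 C2 C3 = 3"
    and "improvement V f W D1 D2 D3" "width f D1 D2 D3 \<le> width f C1 C2 C3"
  shows "sum_width f C1 C2 C3 \<le> sum_width f D1 D2 D3"
proof -
  have "width f C1 C2 C3 < width f D1 D2 D3 \<or>
        (width f C1 C2 C3 = width f D1 D2 D3 \<and>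
          (arity C1 C2 C3 < arity D1 D2 D3 \<or>
           (arity C1 C2 C3 = arity D1 D2 D3 \<and> sum_width f C1 C2 C3 \<le> sum_width f D1 D2 D3)))"
    using assms(1,3) unfolding min_improvement_def by blast
  then show ?thesis
    using assms(2,4) arity_le_3[of D1 D2 D3] by linarith
qed

lemma min_improvement_if_dominated:
  assumes min: "min_improvement V f W C1 C2 C3" and ar: "arity C1 C2 C3 = 3"
    and imp: "improvement V f W D1 D2 D3"
    and "f D1 \<le> f C1" "f D2 \<le> f C2" "f D3 \<le> f C3"
  shows "min_improvement V f W D1 D2 D3"
proof -
  have "width f D1 D2 D3 \<le> width f C1 C2 C3"
    using assms unfolding width_def by auto
  moreover have "sum_width f D1 D2 D3 \<le> sum_width f C1 C2 C3"
    using assms unfolding sum_width_def by auto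
  moreover have "width f C1 C2 C3 < width f D1 D2 D3 \<or>
        (width f C1 C2 C3 = width f D1 D2 D3 \<and>
          (arity C1 C2 C3 < arity D1 D2 D3 \<or>
           (arity C1 C2 C3 = arity D1 D2 D3 \<and> sum_width f C1 C2 C3 \<le> sum_width f D1 D2 D3)))"
    using min imp unfolding min_improvement_def by blast
  ultimately have "width f D1 D2 D3 = width f C1 C2 C3" "arity D1 D2 D3 = arity C1 C2 C3"
    "sum_width f D1 D2 D3 = sum_width f C1 C2 C3"
    using ar arity_le_3[of D1 D2 D3] by linarith+
  with min imp show ?thesis
    unfolding min_improvement_def by simp
qed

lemma min_improvement_inter_le:
  assumes cf: "connectivity_function V f" and WV: "W \<subseteq> V"
    and min: "min_improvement V f W C1 C2 C3" and ar: "arity C1 C2 C3 = 3"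
    and XW: "X \<subseteq> W"
  shows "f (C1 \<inter> X) \<le> f X"
proof -
  have imp: "improvement V f W C1 C2 C3"
    using min unfolding min_improvement_def by blast
  have "finite V"
    using cf unfolding connectivity_function_def by blast
  then have "finite X"
    using WV XW by (blast intro: finite_subset)
  then show ?thesis
    using XW
  proof (induction X rule: finite_psubset_induct)
    case (psubset X)
    have proper: "f (C1 \<inter> Y) \<le> f Y" if "Y \<subset> X" for Y
      using psubset that by blast
    show ?case
    proof (rule ccontr)
      assume "\<not> f (C1 \<inter> X) \<le> f X"
      then have gt: "f X < f (C1 \<inter> X)" by simp
      then have le: "f X \<le> f (C1 \<inter> X)" by simp
      note shift = improvement_shift_into_first[OF cf WV psubset.prems imp le proper]
      have "f (C1 \<union> X) < f C1"
        using shift(2) gt by linarith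
      then have "width f (C1 \<union> X) (C2 - X) (C3 - X) \<le> width f C1 C2 C3"
        and "sum_width f (C1 \<union> X) (C2 - X) (C3 - X) < sum_width f C1 C2 C3"
        using shift(3,4) unfolding width_def sum_width_def by auto
      then show False
        using min_improvement_sum_width_le[OF min ar shift(1)] by simp
    qed
  qed
qed

theorem lemma10:
  fixes V :: "'a set" and f :: "'a set \<Rightarrow> nat" and W W' C1 C2 C3 :: "'a set"
  assumes "connectivity_function V f"
    and "W \<subseteq> V"
    and "min_improvement V f W C1 C2 C3"
    and "arity C1 C2 C3 = 3"
    and "W' \<subseteq> W"
  shows "f (C1 \<inter> W') \<le> f W' \<and>
         (f (C1 \<inter> W') = f W' \<longrightarrow> min_improvement V f W (C1 \<union> W') (C2 - W') (C3 - W'))"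
proof (intro conjI impI)
  note cf = assms(1) and WV = assms(2) and min = assms(3) and ar = assms(4) and W'W = assms(5)
  show "f (C1 \<inter> W') \<le> f W'"
    using min_improvement_inter_le[OF cf WV min ar W'W] .
  assume eq: "f (C1 \<inter> W') = f W'"
  have imp: "improvement V f W C1 C2 C3"
    using min unfolding min_improvement_def by blast
  have proper: "f (C1 \<inter> Y) \<le> f Y" if "Y \<subset> W'" for Y
    using min_improvement_inter_le[OF cf WV min ar] that W'W by blast
  have le: "f W' \<le> f (C1 \<inter> W')"
    using eq by simp
  note shift = improvement_shift_into_first[OF cf WV W'W imp le proper]
  show "min_improvement V f W (C1 \<union> W') (C2 - W') (C3 - W')"
    using min_improvement_if_dominated[OF min ar shift(1)] shift(2-4) eq by simp
qed

end
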